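(* For any simplicial model $\mathcal{C}$, $\mathcal{C}$ is isomorphic to $\mathtt{SC}(\mathtt{LEM}(\mathcal{C}))$; and for any local epistemic model $\mathcal{M}$, $\mathcal{M}^{pr}$ is isomorphic to $\mathtt{LEM}(\mathtt{SC}(\mathcal{M}))$ (so for any proper local epistemic model $\mathcal{M}$, $\mathcal{M}$ is isomorphic to $\mathtt{LEM}(\mathtt{SC}(\mathcal{M}))$).
   Context: Fix a nonempty finite set $\mathbf{A}$ of agents and a countable set $\mathbf{P}$ of predicate letters. A simplicial model is $\mathcal{C}=(\mathcal{V},C,\chi,\ell)$: $\mathcal{V}\neq\emptyset$; $C\subseteq\wp(\mathcal{V})$ with $\emptyset\notin C$, closed under nonempty subsets, containing all singletons; $\chi:\mathcal{V}\to\mathbf{A}$ injective on every member of $C$; $\ell:\mathbf{P}\to\wp(\mathcal{V})$; facets $\mathcal{F}(C)$ are the inclusion-maximal members of $C$. A first-order Kripke model is $\mathcal{M}=(W,\delta,\{R_a\}_{a\in\mathbf{A}},\rho)$: $W\neq\emptyset$, $\delta:W\to\wp(\mathbf{A})\setminus\{\emptyset\}$, $R_a\subseteq W\times W$ with $R_a(w)=\emptyset$ if $a\notin\delta(w)$, $\rho:\mathbf{P}\times W\to\wp(\mathbf{A})$ with $\rho(p,w)\subseteq\delta(w)$. $\mathcal{M}$ is a local epistemic model if: for each $a$ the restriction of $R_a$ to $\{w\mid a\in\delta(w)\}$ is an equivalence relation; $wR_av$ and $a\in\delta(w)$ imply $a\in\delta(v)$; $wR_av$ and $a\in\rho(p,w)$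 imply $a\in\rho(p,v)$; $v\in\bigcap_{a\in\delta(w)}R_a(w)$ implies $\delta(v)\subseteq\delta(w)$. It is proper if additionally $\bigcap_{a\in\delta(w)}R_a(w)=\{w\}$ for all $w$. Properization: with $[w]_\delta=\bigcap_{a\in\delta(w)}R_a(w)$, $\mathcal{M}^{pr}$ has worlds $\{[w]_\delta\mid w\in W\}$, $\delta^{pr}([w]_\delta)=\delta(w)$, $R^{pr}_a=\{([w]_\delta,[v]_\delta)\mid wR_av\}$, $\rho^{pr}(p,[w]_\delta)=\rho(p,w)$. $\mathtt{LEM}(\mathcal{C})$ has worlds $\mathcal{F}(C)$, $\delta(F)=\chi[F]$, $R_a=\{(F,G)\mid a\in\chi[F\cap G]\}$, $\rho(p,F)=\chi[F\cap\ell(p)]$. For a local epistemic model $\mathcal{M}$, let $[w]_a=R_a(w)$ and $F^{\mathcal M}_w=\{(a,[w]_a)\mid a\in\delta(w)\}$; $\mathtt{SC}(\mathcal{M})$ has vertices $\{(a,[w]_a)\mid w\in W,a\in\delta(w)\}$, faces the nonempty subsets of the sets $F^{\mathcal M}_w$ ($w\in W$), coloring $(a,[w]_a)\mapsto a$, and labeling $\ell(p)=\{(a,[w]_a)\mid a\in\rho(p,w)\}$. An isomorphism of simplicial models $\mathcal{C}\to\mathcal{D}$ is a bijection $g:\mathcal{V}^{\mathcal C}\to\mathcal{V}^{\mathcal D}$ with $X\in C^{\mathcal C}\iff g[X]\in C^{\mathcal D}$, $\chi^{\mathcal D}\circ g=\chi^{\mathcal C}$, and $g[\ell^{\mathcal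 C}(p)]=\ell^{\mathcal D}(p)$ for all $p$. An isomorphism of Kripke models is a bijection $f$ of worlds preserving $\delta$ and $\rho$ (i.e. $\delta'(f(w))=\delta(w)$, $\rho'(p,f(w))=\rho(p,w)$) with $wR_av\iff f(w)R'_af(v)$. *)

theory Defs
  imports Main "HOL-Library.Countable"
begin

record ('v, 'a, 'p) smodel =
  sm_verts :: "'v set"
  sm_faces :: "'v set set"
  sm_col   :: "'v \<Rightarrow> 'a"
  sm_lab   :: "'p \<Rightarrow> 'v set"

definition simplicial_model :: "('v, 'a, 'p) smodel \<Rightarrow> bool" where
  "simplicial_model C \<longleftrightarrow>
     sm_verts C \<noteq> {} \<and>
     sm_faces C \<subseteq> Pow (sm_verts C) \<and>
     {} \<notin> sm_faces C \<and>
     (\<forall>X\<in>sm_faces C. \<forall>Y. Y \<subseteq> X \<and> Y \<noteq> {} \<longrightarrow> Y \<in> sm_faces C) \<and>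
     (\<forall>v\<in>sm_verts C. {v} \<in> sm_faces C) \<and>
     (\<forall>X\<in>sm_faces C. inj_on (sm_col C) X) \<and>
     (\<forall>p. sm_lab C p \<subseteq> sm_verts C)"

definition facets :: "('v, 'a, 'p) smodel \<Rightarrow> 'v set set" where
  "facets C = {X \<in> sm_faces C. \<forall>Y\<in>sm_faces C. X \<subseteq> Y \<longrightarrow> X = Y}"

(* First-order Kripke models: worlds W, delta, relations R_a, valuation rho *)
record ('w, 'a, 'p) kmodel =
  km_worlds :: "'w set"
  km_dom    :: "'w \<Rightarrow> 'a set"
  km_rel    :: "'a \<Rightarrow> ('w \<times> 'w) set"
  km_val    :: "'p \<Rightarrow> 'w \<Rightarrow> 'a set"

definition kripke_model :: "('w, 'a, 'p) kmodel \<Rightarrow> bool" where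
  "kripke_model M \<longleftrightarrow>
     km_worlds M \<noteq> {} \<and>
     (\<forall>w\<in>km_worlds M. km_dom M w \<noteq> {}) \<and>
     (\<forall>a. km_rel M a \<subseteq> km_worlds M \<times> km_worlds M) \<and>
     (\<forall>a. \<forall>w\<in>km_worlds M. a \<notin> km_dom M w \<longrightarrow> km_rel M a `` {w} = {}) \<and>
     (\<forall>p. \<forall>w\<in>km_worlds M. km_val M p w \<subseteq> km_dom M w)"

definition dcls :: "('w, 'a, 'p) kmodel \<Rightarrow> 'w \<Rightarrow> 'w set" where
  "dcls M w = (\<Inter>a\<in>km_dom M w. km_rel M a `` {w})"

definition local_epistemic :: "('w, 'a, 'p) kmodel \<Rightarrow> bool" where
  "local_epistemic M \<longleftrightarrow>
     kripke_model M \<and>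
     (\<forall>a. let S = {w \<in> km_worlds M. a \<in> km_dom M w} in equiv S (km_rel M a \<inter> S \<times> S)) \<and>
     (\<forall>a w v. (w, v) \<in> km_rel M a \<and> a \<in> km_dom M w \<longrightarrow> a \<in> km_dom M v) \<and>
     (\<forall>a p w v. (w, v) \<in> km_rel M a \<and> a \<in> km_val M p w \<longrightarrow> a \<in> km_val M p v) \<and>
     (\<forall>w\<in>km_worlds M. \<forall>v\<in>dcls M w. km_dom M v \<subseteq> km_dom M w)"

definition proper :: "('w, 'a, 'p) kmodel \<Rightarrow> bool" where
  "proper M \<longleftrightarrow> local_epistemic M \<and> (\<forall>w\<in>km_worlds M. dcls M w = {w})"

(* Properization; delta and rho on a class are taken at a chosen representative
   (well defined for local epistemic models) *)
definition properize :: "('w, 'a, 'p) kmodel \<Rightarrow> ('w set, 'a, 'p) kmodel" where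
  "properize M =
     \<lparr> km_worlds = dcls M ` km_worlds M,
       km_dom = (\<lambda>X. km_dom M (SOME w. w \<in> km_worlds M \<and> dcls M w = X)),
       km_rel = (\<lambda>a. {(dcls M w, dcls M v) | w v. (w, v) \<in> km_rel M a}),
       km_val = (\<lambda>p X. km_val M p (SOME w. w \<in> km_worlds M \<and> dcls M w = X)) \<rparr>"

definition LEM :: "('v, 'a, 'p) smodel \<Rightarrow> ('v set, 'a, 'p) kmodel" where
  "LEM C =
     \<lparr> km_worlds = facets C,
       km_dom = (\<lambda>F. sm_col C ` F),
       km_rel = (\<lambda>a. {(F, G). F \<in> facets C \<and> G \<in> facets C \<and> a \<in> sm_col C ` (F \<inter> G)}),
       km_val = (\<lambda>p F. sm_col C ` (F \<inter> sm_lab C p)) \<rparr>"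

definition Fw :: "('w, 'a, 'p) kmodel \<Rightarrow> 'w \<Rightarrow> ('a \<times> 'w set) set" where
  "Fw M w = {(a, km_rel M a `` {w}) | a. a \<in> km_dom M w}"

definition SC :: "('w, 'a, 'p) kmodel \<Rightarrow> ('a \<times> 'w set, 'a, 'p) smodel" where
  "SC M =
     \<lparr> sm_verts = {(a, km_rel M a `` {w}) | w a. w \<in> km_worlds M \<and> a \<in> km_dom M w},
       sm_faces = {X. X \<noteq> {} \<and> (\<exists>w\<in>km_worlds M. X \<subseteq> Fw M w)},
       sm_col = fst,
       sm_lab = (\<lambda>p. {(a, km_rel M a `` {w}) | a w. w \<in> km_worlds M \<and> a \<in> km_val M p w}) \<rparr>"

definition smodel_iso :: "('v, 'a, 'p) smodel \<Rightarrow> ('u, 'a, 'p) smodel \<Rightarrow> bool" where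
  "smodel_iso C D \<longleftrightarrow> (\<exists>g. bij_betw g (sm_verts C) (sm_verts D) \<and>
     (\<forall>X. X \<subseteq> sm_verts C \<longrightarrow> (X \<in> sm_faces C \<longleftrightarrow> g ` X \<in> sm_faces D)) \<and>
     (\<forall>v\<in>sm_verts C. sm_col D (g v) = sm_col C v) \<and>
     (\<forall>p. g ` sm_lab C p = sm_lab D p))"

definition kmodel_iso :: "('w, 'a, 'p) kmodel \<Rightarrow> ('u, 'a, 'p) kmodel \<Rightarrow> bool" where
  "kmodel_iso M N \<longleftrightarrow> (\<exists>f. bij_betw f (km_worlds M) (km_worlds N) \<and>
     (\<forall>w\<in>km_worlds M. km_dom N (f w) = km_dom M w) \<and>
     (\<forall>p. \<forall>w\<in>km_worlds M. km_val N p (f w) = km_val M p w) \<and>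
     (\<forall>a. \<forall>w\<in>km_worlds M. \<forall>v\<in>km_worlds M.
        (w, v) \<in> km_rel M a \<longleftrightarrow> (f w, f v) \<in> km_rel N a))"

end

(* Every face of C lies in a facet, since with finitely many agents faces have bounded size.
   In LEM C the chi(v)-class of a facet through a vertex v is the set of all facets through v,
   so v |-> (chi v, facets through v) is an isomorphism from C onto SC (LEM C).

   For a local epistemic model M, w |-> F_w maps the worlds onto the facets of SC M and
   preserves delta, rho and each R_a in both directions, i.e. it is a surjective strong
   homomorphism onto LEM (SC M); two worlds have the same image iff they have the same
   class [w]_delta. A surjective strong homomorphism out of M is determined up to isomorphism
   by its kernel, and w |-> [w]_delta (onto M^pr), resp. the identity when M is proper, is
   another one with the same kernel. *)

theory Submission
  imports Defs
begin

lemma simplicial_modelD: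
  assumes "simplicial_model C"
  shows "X \<in> sm_faces C \<Longrightarrow> X \<subseteq> sm_verts C"
    and "{} \<notin> sm_faces C"
    and "X \<in> sm_faces C \<Longrightarrow> Y \<subseteq> X \<Longrightarrow> Y \<noteq> {} \<Longrightarrow> Y \<in> sm_faces C"
    and "v \<in> sm_verts C \<Longrightarrow> {v} \<in> sm_faces C"
    and "X \<in> sm_faces C \<Longrightarrow> inj_on (sm_col C) X"
    and "sm_lab C p \<subseteq> sm_verts C"
  using assms unfolding simplicial_model_def by auto

lemma finite_face_card_le:
  fixes C :: "('v, 'a::finite, 'p) smodel"
  assumes "simplicial_model C" "X \<in> sm_faces C"
  shows "finite X" and "card X \<le> card (UNIV :: 'a set)"
proof -
  have inj: "inj_on (sm_col C) X" using simplicial_modelD(5)[OF assms] .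
  then show "finite X" by (rule finite_imageD[OF finite])
  have "card X = card (sm_col C ` X)" using inj by (simp add: card_image)
  also have "\<dots> \<le> card (UNIV :: 'a set)" by (rule card_mono) simp_all
  finally show "card X \<le> card (UNIV :: 'a set)" .
qed

lemma face_subset_facet:
  fixes C :: "('v, 'a::finite, 'p) smodel"
  assumes sm: "simplicial_model C" and X: "X \<in> sm_faces C"
  shows "\<exists>F\<in>facets C. X \<subseteq> F"
proof -
  have "\<exists>F. (F \<in> sm_faces C \<and> X \<subseteq> F) \<and>
      (\<forall>Y. Y \<in> sm_faces C \<and> X \<subseteq> Y \<longrightarrow> card Y \<le> card F)"
    by (rule ex_has_greatest_nat[where b = "Suc (card (UNIV :: 'a set))"])
      (use X finite_face_card_le(2)[OF sm] in \<open>auto simp: le_imp_less_Suc\<close>)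
  then obtain F where F: "F \<in> sm_faces C" "X \<subseteq> F"
    and F_max: "\<And>Y. Y \<in> sm_faces C \<Longrightarrow> X \<subseteq> Y \<Longrightarrow> card Y \<le> card F"
    by blast
  have "F = Y" if "Y \<in> sm_faces C" "F \<subseteq> Y" for Y
    using card_seteq[OF finite_face_card_le(1)[OF sm that(1)] that(2)] F_max[OF that(1)] F(2) that(2)
    by simp
  with F show ?thesis unfolding facets_def by blast
qed

lemma face_iff_subset_facet:
  fixes C :: "('v, 'a::finite, 'p) smodel"
  assumes sm: "simplicial_model C"
  shows "X \<in> sm_faces C \<longleftrightarrow> X \<noteq> {} \<and> (\<exists>F\<in>facets C. X \<subseteq> F)"
proof
  assume "X \<in> sm_faces C"
  then show "X \<noteq> {} \<and> (\<exists>F\<in>facets C. X \<subseteq> F)"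
    using simplicial_modelD(2)[OF sm] face_subset_facet[OF sm] by auto
next
  assume "X \<noteq> {} \<and> (\<exists>F\<in>facets C. X \<subseteq> F)"
  then show "X \<in> sm_faces C"
    using simplicial_modelD(3)[OF sm] unfolding facets_def by blast
qed

lemma Union_facets:
  fixes C :: "('v, 'a::finite, 'p) smodel"
  assumes sm: "simplicial_model C"
  shows "\<Union>(facets C) = sm_verts C"
proof
  show "\<Union>(facets C) \<subseteq> sm_verts C"
    using simplicial_modelD(1)[OF sm] unfolding facets_def by blast
  show "sm_verts C \<subseteq> \<Union>(facets C)"
    using simplicial_modelD(4)[OF sm] face_subset_facet[OF sm] by blast
qed

lemma inj_on_col_facet:
  assumes "simplicial_model C" "F \<in> facets C"
  shows "inj_on (sm_col C) F"
  using assms simplicial_modelD(5) unfolding facets_def by blast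

lemma LEM_simps:
  "km_worlds (LEM C) = facets C"
  "km_dom (LEM C) F = sm_col C ` F"
  "(F, G) \<in> km_rel (LEM C) a \<longleftrightarrow> F \<in> facets C \<and> G \<in> facets C \<and> a \<in> sm_col C ` (F \<inter> G)"
  "km_val (LEM C) p F = sm_col C ` (F \<inter> sm_lab C p)"
  by (simp_all add: LEM_def)

lemma faces_SC: "sm_faces (SC M) = {X. X \<noteq> {} \<and> (\<exists>w\<in>km_worlds M. X \<subseteq> Fw M w)}"
  by (simp add: SC_def)

lemma sm_col_SC: "sm_col (SC M) = fst"
  by (simp add: SC_def)

lemma sm_verts_SC_UN:
  "sm_verts (SC M) = (\<Union>w\<in>km_worlds M. (\<lambda>a. (a, km_rel M a `` {w})) ` km_dom M w)"
  by (auto simp: SC_def)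

lemma sm_lab_SC_UN:
  "sm_lab (SC M) p = (\<Union>w\<in>km_worlds M. (\<lambda>a. (a, km_rel M a `` {w})) ` km_val M p w)"
  by (auto simp: SC_def)

lemma mem_lab_SC_iff:
  "(a, S) \<in> sm_lab (SC M) p \<longleftrightarrow> (\<exists>u\<in>km_worlds M. a \<in> km_val M p u \<and> S = km_rel M a `` {u})"
  by (auto simp: SC_def)

lemma Fw_eq_image: "Fw M w = (\<lambda>a. (a, km_rel M a `` {w})) ` km_dom M w"
  by (auto simp: Fw_def)

lemma mem_Fw_iff: "(a, S) \<in> Fw M w \<longleftrightarrow> a \<in> km_dom M w \<and> S = km_rel M a `` {w}"
  unfolding Fw_def by blast

lemma fst_Fw: "fst ` Fw M w = km_dom M w"
  unfolding Fw_def by force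

lemma fst_Fw_Int: "fst ` (Fw M w \<inter> X) = {a \<in> km_dom M w. (a, km_rel M a `` {w}) \<in> X}"
  unfolding Fw_def by force

text \<open>By \<open>Image_rel_LEM_facet\<close>, this is the vertex \<open>(\<chi> v, [F]\<^bsub>\<chi> v\<^esub>)\<close> of \<open>SC (LEM C)\<close> for every
  facet \<open>F\<close> containing \<open>v\<close>.\<close>

definition SC_LEM_vertex :: "('v, 'a, 'p) smodel \<Rightarrow> 'v \<Rightarrow> 'a \<times> 'v set set" where
  "SC_LEM_vertex C v = (sm_col C v, {F \<in> facets C. v \<in> F})"

lemma Image_rel_LEM_facet:
  assumes sm: "simplicial_model C" and F: "F \<in> facets C" "v \<in> F"
  shows "km_rel (LEM C) (sm_col C v) `` {F} = {G \<in> facets C. v \<in> G}"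
proof -
  have "sm_col C v \<in> sm_col C ` (F \<inter> G) \<longleftrightarrow> v \<in> G" for G
  proof
    assume "sm_col C v \<in> sm_col C ` (F \<inter> G)"
    then obtain u where "u \<in> F" "u \<in> G" "sm_col C v = sm_col C u" by blast
    with F(2) show "v \<in> G" using inj_onD[OF inj_on_col_facet[OF sm F(1)]] by metis
  qed (use F(2) in blast)
  then show ?thesis using F(1) unfolding LEM_simps Image_singleton by blast
qed

lemma SC_LEM_vertices_facet:
  assumes sm: "simplicial_model C" and F: "F \<in> facets C"
  shows "(\<lambda>a. (a, km_rel (LEM C) a `` {F})) ` sm_col C ` (F \<inter> S) = SC_LEM_vertex C ` (F \<inter> S)"
  unfolding image_image SC_LEM_vertex_def using Image_rel_LEM_facet[OF sm F] by (intro image_cong) auto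

lemma inj_on_SC_LEM_vertex:
  fixes C :: "('v, 'a::finite, 'p) smodel"
  assumes sm: "simplicial_model C"
  shows "inj_on (SC_LEM_vertex C) (sm_verts C)"
proof (rule inj_onI)
  fix v w assume v: "v \<in> sm_verts C" and "w \<in> sm_verts C"
    and eq: "SC_LEM_vertex C v = SC_LEM_vertex C w"
  from v obtain F where F: "F \<in> facets C" "v \<in> F" using Union_facets[OF sm] by blast
  with eq have "w \<in> F" "sm_col C v = sm_col C w" unfolding SC_LEM_vertex_def by auto
  with F show "v = w" using inj_on_col_facet[OF sm F(1)] by (auto dest: inj_onD)
qed

theorem smodel_iso_SC_LEM:
  fixes C :: "('v, 'a::finite, 'p) smodel"
  assumes sm: "simplicial_model C"
  shows "smodel_iso C (SC (LEM C))"
proof -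
  let ?g = "SC_LEM_vertex C"
  have image_UN: "?g ` (sm_verts C \<inter> S) = (\<Union>F\<in>facets C. ?g ` (F \<inter> S))" for S
    using Union_facets[OF sm] by blast
  have "sm_verts (SC (LEM C)) = ?g ` sm_verts C"
    using image_UN[of UNIV] SC_LEM_vertices_facet[OF sm, of _ UNIV]
    by (simp add: sm_verts_SC_UN LEM_simps)
  moreover have "sm_lab (SC (LEM C)) p = ?g ` sm_lab C p" for p
    using image_UN[of "sm_lab C p"] SC_LEM_vertices_facet[OF sm] simplicial_modelD(6)[OF sm, of p]
    by (simp add: sm_lab_SC_UN LEM_simps Int_absorb1)
  moreover have "X \<in> sm_faces C \<longleftrightarrow> ?g ` X \<in> sm_faces (SC (LEM C))"
    if X: "X \<subseteq> sm_verts C" for X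
  proof -
    have Fw: "Fw (LEM C) F = ?g ` F" if "F \<in> facets C" for F
      using SC_LEM_vertices_facet[OF sm that, of UNIV] by (simp add: Fw_eq_image LEM_simps)
    have sub: "?g ` X \<subseteq> ?g ` F \<longleftrightarrow> X \<subseteq> F" if "F \<in> facets C" for F
    proof -
      have "F \<subseteq> sm_verts C" using that Union_facets[OF sm] by blast
      with X show ?thesis
        using inj_on_image_mem_iff[OF inj_on_SC_LEM_vertex[OF sm]] unfolding image_subset_iff by blast
    qed
    show ?thesis
      by (simp add: face_iff_subset_facet[OF sm] faces_SC LEM_simps Fw sub cong: bex_cong)
  qed
  ultimately show ?thesis
    unfolding smodel_iso_def using inj_on_SC_LEM_vertex[OF sm]
    by (intro exI[of _ ?g]) (simp add: bij_betw_def SC_LEM_vertex_def sm_col_SC)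
qed

lemma local_epistemic_equiv:
  assumes "local_epistemic M"
  shows "equiv {w \<in> km_worlds M. a \<in> km_dom M w} (km_rel M a)"
proof -
  let ?S = "{w \<in> km_worlds M. a \<in> km_dom M w}"
  have "(w, v) \<in> ?S \<times> ?S" if wv: "(w, v) \<in> km_rel M a" for w v
  proof -
    have W: "w \<in> km_worlds M" "v \<in> km_worlds M"
      using assms wv unfolding local_epistemic_def kripke_model_def by blast+
    moreover have "a \<in> km_dom M w"
      using assms wv W(1) unfolding local_epistemic_def kripke_model_def by blast
    moreover then have "a \<in> km_dom M v"
      using assms wv unfolding local_epistemic_def by blast
    ultimately show ?thesis by blast
  qed
  then have "km_rel M a \<inter> ?S \<times> ?S = km_rel M a" by auto
  moreover have "equiv ?S (km_rel M a \<inter> ?S \<times> ?S)"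
    using assms unfolding local_epistemic_def Let_def by blast
  ultimately show ?thesis by simp
qed

lemma local_epistemic_rel_iff:
  assumes "local_epistemic M"
  shows "(w, v) \<in> km_rel M a \<longleftrightarrow>
    w \<in> km_worlds M \<and> a \<in> km_dom M w \<and> v \<in> km_worlds M \<and> a \<in> km_dom M v \<and>
    km_rel M a `` {w} = km_rel M a `` {v}"
  using equiv_class_eq_iff[OF local_epistemic_equiv[OF assms]] by blast

lemma local_epistemic_dcls_dom:
  assumes "local_epistemic M" "w \<in> km_worlds M" "v \<in> dcls M w"
  shows "km_dom M v \<subseteq> km_dom M w"
  using assms unfolding local_epistemic_def by blast

lemma local_epistemic_val_rel:
  assumes "local_epistemic M" "(w, v) \<in> km_rel M a" "a \<in> km_val M p w"
  shows "a \<in> km_val M p v"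
  using assms unfolding local_epistemic_def by blast

lemma local_epistemic_val_dom:
  assumes "local_epistemic M" "w \<in> km_worlds M"
  shows "km_val M p w \<subseteq> km_dom M w"
  using assms unfolding local_epistemic_def kripke_model_def by blast

lemma mem_dcls_self:
  assumes "local_epistemic M" "w \<in> km_worlds M"
  shows "w \<in> dcls M w"
  using assms local_epistemic_rel_iff[OF assms(1)] unfolding dcls_def by blast

lemma dcls_eq_imp_dom_eq:
  assumes "local_epistemic M" "w \<in> km_worlds M" "v \<in> km_worlds M" "dcls M w = dcls M v"
  shows "km_dom M w = km_dom M v"
  using assms local_epistemic_dcls_dom mem_dcls_self by (metis subset_antisym)

lemma dcls_eq_iff_Fw_eq:
  assumes le: "local_epistemic M" and w: "w \<in> km_worlds M" and v: "v \<in> km_worlds M"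
  shows "dcls M w = dcls M v \<longleftrightarrow> Fw M w = Fw M v"
proof
  assume eq: "dcls M w = dcls M v"
  have dom: "km_dom M w = km_dom M v" using dcls_eq_imp_dom_eq[OF le w v eq] .
  have "v \<in> dcls M w" using eq mem_dcls_self[OF le v] by simp
  then have "(w, v) \<in> km_rel M a" if "a \<in> km_dom M w" for a
    using that unfolding dcls_def by blast
  then have "km_rel M a `` {w} = km_rel M a `` {v}" if "a \<in> km_dom M w" for a
    using that local_epistemic_rel_iff[OF le] by blast
  with dom show "Fw M w = Fw M v" unfolding Fw_def by auto
next
  assume eq: "Fw M w = Fw M v"
  then have "km_dom M w = km_dom M v" using fst_Fw by metis
  moreover have "km_rel M a `` {w} = km_rel M a `` {v}" if "a \<in> km_dom M w" for a
  proof -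
    have "(a, km_rel M a `` {w}) \<in> Fw M w" using that by (simp add: mem_Fw_iff)
    then have "(a, km_rel M a `` {w}) \<in> Fw M v" using eq by simp
    then show ?thesis by (simp add: mem_Fw_iff)
  qed
  ultimately show "dcls M w = dcls M v" unfolding dcls_def by (intro INF_cong) simp_all
qed

lemma Fw_subset_imp_eq:
  assumes le: "local_epistemic M" and w: "w \<in> km_worlds M" and v: "v \<in> km_worlds M"
    and sub: "Fw M w \<subseteq> Fw M v"
  shows "Fw M w = Fw M v"
proof -
  have dom: "km_dom M w \<subseteq> km_dom M v" using sub by (metis fst_Fw image_mono)
  have cls: "km_rel M a `` {w} = km_rel M a `` {v}" if "a \<in> km_dom M w" for a
  proof -
    have "(a, km_rel M a `` {w}) \<in> Fw M w" using that by (simp add: mem_Fw_iff)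
    with sub have "(a, km_rel M a `` {w}) \<in> Fw M v" by blast
    then show ?thesis by (simp add: mem_Fw_iff)
  qed
  have "v \<in> dcls M w"
    unfolding dcls_def using cls dom v local_epistemic_rel_iff[OF le] by blast
  then have "km_dom M v \<subseteq> km_dom M w" using local_epistemic_dcls_dom[OF le w] by blast
  with dom cls show ?thesis unfolding Fw_def by auto
qed

lemma facets_SC:
  assumes le: "local_epistemic M"
  shows "facets (SC M) = Fw M ` km_worlds M"
proof -
  have Fw_face: "Fw M w \<in> sm_faces (SC M)" if "w \<in> km_worlds M" for w
    using that le fst_Fw[of M w] unfolding faces_SC local_epistemic_def kripke_model_def by fastforce
  show ?thesis
  proof
    show "facets (SC M) \<subseteq> Fw M ` km_worlds M"
    proof
      fix X assume X: "X \<in> facets (SC M)"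
      then obtain w where "w \<in> km_worlds M" "X \<subseteq> Fw M w" unfolding facets_def faces_SC by blast
      with X Fw_face show "X \<in> Fw M ` km_worlds M" unfolding facets_def by blast
    qed
  next
    have "Fw M w \<in> facets (SC M)" if "w \<in> km_worlds M" for w
      using that Fw_face Fw_subset_imp_eq[OF le that] unfolding facets_def faces_SC by blast
    then show "Fw M ` km_worlds M \<subseteq> facets (SC M)" by blast
  qed
qed

definition kmodel_strong_hom_onto :: "('w, 'a, 'p) kmodel \<Rightarrow> ('u, 'a, 'p) kmodel \<Rightarrow> ('w \<Rightarrow> 'u) \<Rightarrow> bool" where
  "kmodel_strong_hom_onto M N h \<longleftrightarrow>
     h ` km_worlds M = km_worlds N \<and>
     (\<forall>w\<in>km_worlds M. km_dom N (h w) = km_dom M w \<and> (\<forall>p. km_val N p (h w) = km_val M p w)) \<and>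
     (\<forall>a. \<forall>w\<in>km_worlds M. \<forall>v\<in>km_worlds M. (w, v) \<in> km_rel M a \<longleftrightarrow> (h w, h v) \<in> km_rel N a)"

lemma kmodel_strong_hom_ontoD:
  assumes "kmodel_strong_hom_onto M N h"
  shows "h ` km_worlds M = km_worlds N"
    and "w \<in> km_worlds M \<Longrightarrow> km_dom N (h w) = km_dom M w"
    and "w \<in> km_worlds M \<Longrightarrow> km_val N p (h w) = km_val M p w"
    and "w \<in> km_worlds M \<Longrightarrow> v \<in> km_worlds M \<Longrightarrow>
      (h w, h v) \<in> km_rel N a \<longleftrightarrow> (w, v) \<in> km_rel M a"
  using assms unfolding kmodel_strong_hom_onto_def by auto

lemma kmodel_strong_hom_onto_id: "kmodel_strong_hom_onto M M id"
  by (simp add: kmodel_strong_hom_onto_def)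

lemma kmodel_strong_hom_onto_eqD:
  assumes h: "kmodel_strong_hom_onto M N h"
    and w: "w \<in> km_worlds M" and v: "v \<in> km_worlds M" and eq: "h w = h v"
  shows "km_dom M w = km_dom M v" and "km_val M p w = km_val M p v"
  using kmodel_strong_hom_ontoD(2,3)[OF h] w v eq by metis+

lemma kmodel_iso_if_same_kernel:
  assumes h: "kmodel_strong_hom_onto M N h" and q: "kmodel_strong_hom_onto M Q q"
    and ker: "\<And>w v. w \<in> km_worlds M \<Longrightarrow> v \<in> km_worlds M \<Longrightarrow> h w = h v \<longleftrightarrow> q w = q v"
  shows "kmodel_iso Q N"
proof -
  define f where "f = h \<circ> inv_into (km_worlds M) q"
  have fq: "f (q w) = h w" if w: "w \<in> km_worlds M" for w
  proof -
    let ?w' = "inv_into (km_worlds M) q (q w)"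
    have "?w' \<in> km_worlds M" "q ?w' = q w" using w by (auto intro: inv_into_into f_inv_into_f)
    with w ker show ?thesis unfolding f_def by simp
  qed
  have WQ: "km_worlds Q = q ` km_worlds M" and WN: "km_worlds N = h ` km_worlds M"
    using kmodel_strong_hom_ontoD(1)[OF q] kmodel_strong_hom_ontoD(1)[OF h] by simp_all
  have "inj_on f (km_worlds Q)"
    unfolding WQ by (rule inj_onI) (auto simp: fq ker)
  moreover have "f ` km_worlds Q = km_worlds N"
    unfolding WQ WN image_image using fq by simp
  ultimately have "bij_betw f (km_worlds Q) (km_worlds N)" by (simp add: bij_betw_def)
  moreover have "km_dom N (f X) = km_dom Q X" "km_val N p (f X) = km_val Q p X"
    if "X \<in> km_worlds Q" for X p
    using that fq kmodel_strong_hom_ontoD(2,3)[OF h] kmodel_strong_hom_ontoD(2,3)[OF q]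
    unfolding WQ by auto
  moreover have "(X, Y) \<in> km_rel Q a \<longleftrightarrow> (f X, f Y) \<in> km_rel N a"
    if "X \<in> km_worlds Q" "Y \<in> km_worlds Q" for X Y a
    using that fq kmodel_strong_hom_ontoD(4)[OF h] kmodel_strong_hom_ontoD(4)[OF q]
    unfolding WQ by auto
  ultimately show ?thesis unfolding kmodel_iso_def by blast
qed

lemma kmodel_strong_hom_onto_Fw_LEM_SC:
  assumes le: "local_epistemic M"
  shows "kmodel_strong_hom_onto M (LEM (SC M)) (Fw M)"
proof -
  have val: "km_val (LEM (SC M)) p (Fw M w) = km_val M p w" if w: "w \<in> km_worlds M" for w p
  proof -
    have "(a, km_rel M a `` {w}) \<in> sm_lab (SC M) p \<longleftrightarrow> a \<in> km_val M p w"
      if a: "a \<in> km_dom M w" for a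
    proof
      assume "(a, km_rel M a `` {w}) \<in> sm_lab (SC M) p"
      then obtain u where u: "u \<in> km_worlds M" "a \<in> km_val M p u"
        and cls: "km_rel M a `` {w} = km_rel M a `` {u}"
        by (auto simp: mem_lab_SC_iff)
      have "a \<in> km_dom M u" using local_epistemic_val_dom[OF le u(1)] u(2) by blast
      with u a w cls have "(u, w) \<in> km_rel M a"
        using local_epistemic_rel_iff[OF le, of u w a] by simp
      with u(2) show "a \<in> km_val M p w" using local_epistemic_val_rel[OF le] by blast
    next
      assume "a \<in> km_val M p w"
      with w show "(a, km_rel M a `` {w}) \<in> sm_lab (SC M) p" by (auto simp: mem_lab_SC_iff)
    qed
    then show ?thesis
      using local_epistemic_val_dom[OF le w] by (auto simp: LEM_simps sm_col_SC fst_Fw_Int)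
  qed
  have rel: "(w, v) \<in> km_rel M a \<longleftrightarrow> (Fw M w, Fw M v) \<in> km_rel (LEM (SC M)) a"
    if w: "w \<in> km_worlds M" and v: "v \<in> km_worlds M" for w v a
  proof -
    have "(w, v) \<in> km_rel M a \<longleftrightarrow>
        a \<in> km_dom M w \<and> a \<in> km_dom M v \<and> km_rel M a `` {w} = km_rel M a `` {v}"
      using local_epistemic_rel_iff[OF le, of w v a] w v by blast
    also have "\<dots> \<longleftrightarrow> a \<in> fst ` (Fw M w \<inter> Fw M v)"
      by (auto simp: fst_Fw_Int mem_Fw_iff)
    also have "\<dots> \<longleftrightarrow> (Fw M w, Fw M v) \<in> km_rel (LEM (SC M)) a"
      using facets_SC[OF le] w v by (simp add: LEM_simps sm_col_SC)
    finally show ?thesis .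
  qed
  have "Fw M ` km_worlds M = km_worlds (LEM (SC M))"
    using facets_SC[OF le] by (simp add: LEM_simps)
  moreover have "km_dom (LEM (SC M)) (Fw M w) = km_dom M w" for w
    by (simp add: LEM_simps sm_col_SC fst_Fw)
  ultimately show ?thesis
    unfolding kmodel_strong_hom_onto_def by (simp add: val rel)
qed

lemma properize_simps:
  "km_worlds (properize M) = dcls M ` km_worlds M"
  "km_dom (properize M) X = km_dom M (SOME w. w \<in> km_worlds M \<and> dcls M w = X)"
  "km_val (properize M) p X = km_val M p (SOME w. w \<in> km_worlds M \<and> dcls M w = X)"
  "(X, Y) \<in> km_rel (properize M) a \<longleftrightarrow>
    (\<exists>w v. X = dcls M w \<and> Y = dcls M v \<and> (w, v) \<in> km_rel M a)"
  by (simp_all add: properize_def)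

lemma kmodel_strong_hom_onto_dcls_properize:
  assumes le: "local_epistemic M"
  shows "kmodel_strong_hom_onto M (properize M) (dcls M)"
proof -
  note Fw_hom = kmodel_strong_hom_onto_Fw_LEM_SC[OF le]
  have Fw_eq: "Fw M w = Fw M v" if "w \<in> km_worlds M" "v \<in> km_worlds M" "dcls M w = dcls M v" for w v
    using that dcls_eq_iff_Fw_eq[OF le] by blast
  have dom_val: "km_dom (properize M) (dcls M w) = km_dom M w"
    "km_val (properize M) p (dcls M w) = km_val M p w" if w: "w \<in> km_worlds M" for w p
  proof -
    let ?r = "SOME u. u \<in> km_worlds M \<and> dcls M u = dcls M w"
    have r: "?r \<in> km_worlds M" "dcls M ?r = dcls M w"
      using someI[of "\<lambda>u. u \<in> km_worlds M \<and> dcls M u = dcls M w" w] w by simp_all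
    \<comment> \<open>whichever representative SOME picks, it has the same \<open>Fw\<close>, hence the same \<delta> and \<rho>\<close>
    then have "Fw M ?r = Fw M w" using Fw_eq w by blast
    from kmodel_strong_hom_onto_eqD[OF Fw_hom r(1) w this]
    show "km_dom (properize M) (dcls M w) = km_dom M w"
      "km_val (properize M) p (dcls M w) = km_val M p w"
      by (simp_all add: properize_simps)
  qed
  have rel: "(dcls M w, dcls M v) \<in> km_rel (properize M) a \<longleftrightarrow> (w, v) \<in> km_rel M a"
    if w: "w \<in> km_worlds M" and v: "v \<in> km_worlds M" for w v a
  proof
    assume "(dcls M w, dcls M v) \<in> km_rel (properize M) a"
    then obtain w' v' where eq: "dcls M w = dcls M w'" "dcls M v = dcls M v'"
      and rel': "(w', v') \<in> km_rel M a"
      unfolding properize_simps by blast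
    then have W': "w' \<in> km_worlds M" "v' \<in> km_worlds M"
      using local_epistemic_rel_iff[OF le, of w' v' a] by simp_all
    then have "(Fw M w', Fw M v') \<in> km_rel (LEM (SC M)) a"
      using rel' kmodel_strong_hom_ontoD(4)[OF Fw_hom] by simp
    moreover have "Fw M w' = Fw M w" "Fw M v' = Fw M v"
      using Fw_eq[OF W'(1) w eq(1)[symmetric]] Fw_eq[OF W'(2) v eq(2)[symmetric]] by simp_all
    ultimately show "(w, v) \<in> km_rel M a"
      using kmodel_strong_hom_ontoD(4)[OF Fw_hom w v] by simp
  next
    assume "(w, v) \<in> km_rel M a"
    then show "(dcls M w, dcls M v) \<in> km_rel (properize M) a"
      unfolding properize_simps by (intro exI conjI) auto
  qed
  show ?thesis
    unfolding kmodel_strong_hom_onto_def using dom_val rel by (simp add: properize_simps)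
qed

theorem kmodel_iso_properize_LEM_SC:
  assumes "local_epistemic M"
  shows "kmodel_iso (properize M) (LEM (SC M))"
  by (rule kmodel_iso_if_same_kernel[OF kmodel_strong_hom_onto_Fw_LEM_SC[OF assms]
        kmodel_strong_hom_onto_dcls_properize[OF assms]])
    (simp add: dcls_eq_iff_Fw_eq[OF assms])

theorem kmodel_iso_LEM_SC_if_proper:
  assumes "proper M"
  shows "kmodel_iso M (LEM (SC M))"
proof -
  have le: "local_epistemic M" using assms unfolding proper_def by blast
  have "Fw M w = Fw M v \<longleftrightarrow> id w = id v" if "w \<in> km_worlds M" "v \<in> km_worlds M" for w v
    using assms that dcls_eq_iff_Fw_eq[OF le] unfolding proper_def by auto
  then show ?thesis
    by (rule kmodel_iso_if_same_kernel[OF kmodel_strong_hom_onto_Fw_LEM_SC[OF le] kmodel_strong_hom_onto_id])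
qed

theorem proposition3:
  shows "(\<forall>C :: ('v, 'a::finite, 'p::countable) smodel.
            simplicial_model C \<longrightarrow> smodel_iso C (SC (LEM C))) \<and>
         (\<forall>M :: ('w, 'a, 'p) kmodel.
            local_epistemic M \<longrightarrow> kmodel_iso (properize M) (LEM (SC M))) \<and>
         (\<forall>M :: ('w, 'a, 'p) kmodel.
            proper M \<longrightarrow> kmodel_iso M (LEM (SC M)))"
  using smodel_iso_SC_LEM kmodel_iso_properize_LEM_SC kmodel_iso_LEM_SC_if_proper by blast

end
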